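(* Let $a_1 \ge 1$ be an integer and $f := X^2 - a_1X - 1$. There exist $\bm{x} \in \mathcal{L}(f)$ and an integer $m \ge 1$ such that $\rho(\bm{x}; m) = 4$ and $x_j \not\equiv 0 \pmod m$ for all $j \ge 0$. In particular, $4 \in \mathcal{R}(f)$.
   Context: $\mathcal{L}(f)$ is the set of integer sequences $\bm{x}=(x_n)_{n\ge0}$ with $x_{n+2} = a_1x_{n+1} + x_n$ for all $n\ge0$. For an integer $m\ge1$, $\rho(\bm{x};m) := \#\{x_n \bmod m : n\ge0\}$, and $\mathcal{R}(f) := \{\rho(\bm{x}; m) : \bm{x}\in\mathcal{L}(f),\ m\in\mathbb{Z}^+\}$. *)

theory Defs
  imports Main
begin

text \<open>Linear recurrence sequences for f = X^2 - a1 X - 1: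
  integer sequences with x (n+2) = a1 * x (n+1) + x n.\<close>
definition LRS :: "int \<Rightarrow> (nat \<Rightarrow> int) set" where
  "LRS a1 = {x. \<forall>n. x (n + 2) = a1 * x (n + 1) + x n}"

definition rho :: "(nat \<Rightarrow> int) \<Rightarrow> int \<Rightarrow> nat" where
  "rho x m = card {x n mod m | n. True}"

definition Rset :: "int \<Rightarrow> nat set" where
  "Rset a1 = {rho x m | x m. x \<in> LRS a1 \<and> m \<ge> 1}"

end

theory Submission
  imports Defs
begin

text \<open>For a \<noteq> 2 take the Lucas-type sequence 2, a, a^2 + 2, \<dots> modulo m = a^2 + 4:
  since x(2) \<equiv> -x(0) and x(3) \<equiv> -x(1), it runs through the four nonzero residues 2, a, -2, -a
  with period 4. For a = 2 the sequence 1, 1, 3, 7, \<dots> modulo 5 has period 12 and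
  takes exactly the values 1, 2, 3, 4.\<close>

fun lrs_seq :: "int \<Rightarrow> int \<Rightarrow> int \<Rightarrow> nat \<Rightarrow> int" where
  "lrs_seq a u v 0 = u"
| "lrs_seq a u v (Suc 0) = v"
| "lrs_seq a u v (Suc (Suc n)) = a * lrs_seq a u v (Suc n) + lrs_seq a u v n"

lemma lrs_seq_in_LRS: "lrs_seq a u v \<in> LRS a"
  unfolding LRS_def by (simp add: numeral_2_eq_2)

lemma LRS_SucSuc: "x \<in> LRS a \<Longrightarrow> x (Suc (Suc n)) = a * x (Suc n) + x n"
  by (simp add: LRS_def numeral_2_eq_2)

text \<open>A recurrence of order two is determined by two consecutive terms, also modulo m.\<close>
lemma LRS_mod_periodic:
  assumes x: "x \<in> LRS a"
    and p0: "x p mod m = x 0 mod m" and p1: "x (Suc p) mod m = x 1 mod m"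
  shows "x (n + p) mod m = x n mod m"
proof -
  have "x (n + p) mod m = x n mod m \<and> x (Suc n + p) mod m = x (Suc n) mod m"
  proof (induction n)
    case (Suc n)
    have "x (Suc (Suc n) + p) mod m = (a * x (Suc n + p) + x (n + p)) mod m"
      using LRS_SucSuc[OF x, of "n + p"] by simp
    also have "\<dots> = (a * x (Suc n) + x n) mod m"
      using Suc by (intro mod_add_cong mod_mult_cong) auto
    finally show ?case using LRS_SucSuc[OF x, of n] Suc by simp
  qed (use p0 p1 in simp)
  then show ?thesis ..
qed

lemma residues_periodic:
  assumes "0 < (p::nat)" and "\<And>n. x (n + p) mod m = x n mod m"
  shows "{x n mod m | n. True} = (\<lambda>n. x n mod m) ` {..<p}"
proof -
  have "x n mod m = x (n mod p) mod m" for n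
  proof (induction n rule: less_induct)
    case (less n)
    show ?case
    proof (cases "n < p")
      case False
      then have "x n mod m = x (n - p) mod m" using assms(2)[of "n - p"] by simp
      also have "\<dots> = x ((n - p) mod p) mod m" using less assms(1) False by simp
      finally show ?thesis using False by (simp add: le_mod_geq)
    qed simp
  qed
  then show ?thesis using assms(1) by (auto intro: rev_image_eqI[of "_ mod p"])
qed

lemma residues_half_companion_pell_mod_5: "{lrs_seq 2 1 1 n mod 5 | n. True} = {1, 2, 3, 4}"
proof -
  have "{lrs_seq 2 1 1 n mod 5 | n. True} = (\<lambda>n. lrs_seq 2 1 1 n mod 5) ` {..<12}"
    by (intro residues_periodic LRS_mod_periodic[OF lrs_seq_in_LRS])
      (simp_all add: numeral_eq_Suc)
  also have "\<dots> = {1, 2, 3, 4}"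
    by (simp add: lessThan_atLeast0 atLeastLessThan_upt upt_rec numeral_eq_Suc) blast
  finally show ?thesis .
qed

lemma residues_lucas_mod:
  fixes a :: int
  assumes "1 \<le> a"
  shows "{lrs_seq a 2 a n mod (a\<^sup>2 + 4) | n. True} = {2, a, a\<^sup>2 + 2, a\<^sup>2 + 4 - a}"
proof -
  define m where "m = a\<^sup>2 + 4"
  define x where "x = lrs_seq a 2 a"
  \<comment> \<open>The terms are written so that their residues modulo m can be read off.\<close>
  have x: "x 0 = 2" "x (Suc 0) = a" "x 2 = a\<^sup>2 + 2" "x 3 = m - a + (a - 1) * m"
    "x 4 = 2 + a\<^sup>2 * m" "x 5 = a + a * (a\<^sup>2 + 1) * m"
    by (simp_all add: x_def m_def numeral_eq_Suc algebra_simps power2_eq_square)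
  have "a \<le> a\<^sup>2"
    using self_le_power[of a 2] assms by simp
  then have "a < m" "2 < m"
    using assms by (simp_all add: m_def)
  moreover have "x 3 mod m = (m - a) mod m"
    unfolding x by (rule mod_mult_self1)
  ultimately have "x 0 mod m = 2" "x 1 mod m = a" "x 2 mod m = a\<^sup>2 + 2" "x 3 mod m = a\<^sup>2 + 4 - a"
    using assms by (simp_all add: x m_def del: minus_mod_self1)
  moreover have "{x n mod m | n. True} = (\<lambda>n. x n mod m) ` {..<4}"
    by (intro residues_periodic LRS_mod_periodic[of _ a])
      (simp_all add: x lrs_seq_in_LRS[of a 2 a, folded x_def])
  ultimately show ?thesis
    by (auto simp: x_def m_def lessThan_nat_numeral lessThan_Suc)
qed

lemma card_lucas_residues:
  fixes a :: int
  assumes "1 \<le> a" "a \<noteq> 2"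
  shows "card {2, a, a\<^sup>2 + 2, a\<^sup>2 + 4 - a} = 4"
proof -
  have "a \<le> a\<^sup>2"
    using self_le_power[of a 2] assms(1) by simp
  moreover have "4 * a < a\<^sup>2 + 4"
    using assms(2) power2_diff[of a 2] zero_less_power2[of "a - 2"] by simp
  ultimately show ?thesis
    using assms by auto
qed

theorem mainTheorem16:
  fixes a1 :: int
  assumes "a1 \<ge> 1"
  shows "(\<exists>x m. x \<in> LRS a1 \<and> m \<ge> 1 \<and> rho x m = 4 \<and> (\<forall>j. \<not> m dvd x j))
         \<and> 4 \<in> Rset a1"
proof -
  obtain x m R where x: "x \<in> LRS a1" and m: "m \<ge> 1" and R: "{x n mod m | n. True} = R"
    and card: "card R = 4" and zero: "0 \<notin> R"
  proof (cases "a1 = 2")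
    case True
    then show ?thesis
      using that[OF _ _ residues_half_companion_pell_mod_5] lrs_seq_in_LRS by simp
  next
    case False
    have "0 < a1\<^sup>2 + 2" "0 < a1\<^sup>2 + 4 - a1"
      using self_le_power[of a1 2] assms by simp_all
    then show ?thesis
      using that[OF lrs_seq_in_LRS _ residues_lucas_mod card_lucas_residues] assms False by simp
  qed
  have rho: "rho x m = 4"
    using R card by (simp add: rho_def)
  have "\<forall>j. \<not> m dvd x j"
    using R zero by (auto simp: dvd_eq_mod_eq_0)
  moreover have "4 \<in> Rset a1"
    unfolding Rset_def using x m rho by force
  ultimately show ?thesis
    using x m rho by blast
qed

end
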